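(* Let $K\ge 2$ be an integer and $M=\frac{m}{K}$ with $m\in\{1,\dots,K-1\}$. For $L\in\{1,\dots,K-1\}$ let $j^*=\left\lceil m\left(1-\frac{L}{K}\right)\right\rceil$, $$R_K(M,L)=1+\frac{\sum_{i=\max(0,m-L+1)}^{j^*-1}\binom{K-L}{i}\binom{L-1}{m-i}+\sum_{i=j^*}^{\min(m,K-L-1)}\binom{K-L-1}{i}\binom{L}{m-i}}{\binom{K}{m}},$$ and $R_K(M)=\max_{0<L<K}R_K(M,L)$. Let $\hat R_K(M)=K\left(1-\frac{M}{2}\right)\min\left\{\frac{1}{1+\frac{MK}{2}},\frac{2}{K}\right\}$. Then $$R_K(M)\le \hat R_K(M)\quad\text{for all } K \text{ and all } M\in\left\{\tfrac{2}{K},\tfrac{4}{K},\dots,\tfrac{2(\lceil K/2\rceil-1)}{K}\right\},$$ and the inequality is strict except when $K$ is odd and $M=\frac{K-1}{K}$.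
   Context: $\hat R_K(M)$ is the worst-case rate of the Maddah-Ali–Niesen coded caching scheme with $N=2$ files, $K$ users and cache size $M$. Binomial coefficients $\binom{a}{b}$ are $0$ when $b<0$ or $b>a$, and empty sums are $0$. *)

theory Defs
  imports Complex_Main
begin

definition jstar :: "nat \<Rightarrow> nat \<Rightarrow> nat \<Rightarrow> nat" where
  "jstar K m L = nat \<lceil>real m * (1 - real L / real K)\<rceil>"

text \<open>R_K(M,L) with M = m/K. The lower limit max(0, m-L+1) is the truncated
  natural subtraction m+1-L; the index set {a..<j*} is the range a..j*-1 (empty if j*=0).\<close>
definition R_KL :: "nat \<Rightarrow> nat \<Rightarrow> nat \<Rightarrow> real" where
  "R_KL K m L = 1 +
     ((\<Sum>i\<in>{m + 1 - L ..< jstar K m L}. real ((K - L) choose i) * real ((L - 1) choose (m - i)))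
    + (\<Sum>i\<in>{jstar K m L .. min m (K - L - 1)}. real ((K - L - 1) choose i) * real (L choose (m - i))))
     / real (K choose m)"

definition R_K :: "nat \<Rightarrow> nat \<Rightarrow> real" where
  "R_K K m = Max ((\<lambda>L. R_KL K m L) ` {1..<K})"

definition R_hat :: "nat \<Rightarrow> real \<Rightarrow> real" where
  "R_hat K M = real K * (1 - M / 2) * min (1 / (1 + M * real K / 2)) (2 / real K)"

end

theory Submission imports Defs begin

text \<open>Up to the correction term \<open>C(K-L-1, j*-1) C(L-1, m-j*)\<close>, which is positive, the numerator of
  \<open>R_K(M,L)\<close> is a Vandermonde convolution for \<open>C(K-1, m)\<close> whose factors switch at \<open>i = j*\<close> from
  \<open>(K-L, L-1)\<close> to \<open>(K-L-1, L)\<close>; the switch is accounted for by Pascal's rule. Hence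
  \<open>R_K(M) \<le> 1 + (C(K-1,m) - 1)/C(K,m) < 1 + (K-m)/K\<close>, and for \<open>m \<le> K-2\<close> the right-hand side is
  \<open>\<hat>R_K(M)\<close>. For \<open>m = K-1\<close> both sides equal \<open>1\<close>.\<close>

lemma vandermonde_switch:
  fixes n p m j :: nat
  assumes "1 \<le> j" "j \<le> m"
  shows "(\<Sum>i<j. (Suc n choose i) * (p choose (m - i)))
         + (\<Sum>i\<in>{j..m}. (n choose i) * (Suc p choose (m - i)))
         + (n choose (j - 1)) * (p choose (m - j)) = (n + Suc p) choose m"
  using assms
proof (induction j)
  case 0
  then show ?case by simp
next
  case (Suc j)
  show ?case
  proof (cases "j = 0")
    case True
    have "(n + Suc p) choose m = (\<Sum>i\<le>m. (n choose i) * (Suc p choose (m - i)))"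
      by (rule vandermonde [symmetric])
    also have "\<dots> = (Suc p choose m) + (\<Sum>i\<in>{1..m}. (n choose i) * (Suc p choose (m - i)))"
      by (simp add: atMost_atLeast0 sum.atLeast_Suc_atMost)
    finally show ?thesis
      using True Suc.prems by (cases m) auto
  next
    case False
    then obtain j' where j': "j = Suc j'"
      by (cases j) auto
    obtain q where q: "m - j = Suc q" "m - Suc j = q"
      using Suc.prems by (metis Suc_diff_Suc Suc_le_eq diff_Suc_Suc)
    have IH: "(\<Sum>i<j. (Suc n choose i) * (p choose (m - i)))
         + (\<Sum>i\<in>{j..m}. (n choose i) * (Suc p choose (m - i)))
         + (n choose (j - 1)) * (p choose (m - j)) = (n + Suc p) choose m"
      using Suc False by simp
    have split: "(\<Sum>i\<in>{j..m}. (n choose i) * (Suc p choose (m - i)))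
        = (n choose j) * (Suc p choose (m - j)) + (\<Sum>i\<in>{Suc j..m}. (n choose i) * (Suc p choose (m - i)))"
      using Suc.prems by (simp add: sum.atLeast_Suc_atMost)
    have pascal: "(Suc n choose j) * (p choose (m - j)) + (n choose j) * (p choose (m - Suc j))
        = (n choose j) * (Suc p choose (m - j)) + (n choose (j - 1)) * (p choose (m - j))"
      unfolding q by (simp add: j' algebra_simps)
    show ?thesis
      using IH split pascal by simp
  qed
qed

lemma jstar_bounds:
  assumes "1 \<le> L" "L < K" "1 \<le> m" "m < K"
  shows "1 \<le> jstar K m L" "jstar K m L \<le> m" "jstar K m L \<le> K - L" "m < jstar K m L + L"
proof -
  define x where "x = real m * (1 - real L / real K)"
  have K: "real K > 0"
    using assms by simp
  have x_eq: "x = real m * real (K - L) / real K"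
    using assms K unfolding x_def by (simp add: of_nat_diff field_simps)
  have "x > 0"
    using x_eq assms K by simp
  moreover have "x \<le> real m"
    unfolding x_def using assms by (simp add: mult_left_le)
  moreover have "x \<le> real (K - L)"
    unfolding x_eq using assms K mult_right_mono[of "real m" "real K" "real (K - L)"]
    by (simp add: divide_le_eq mult.commute)
  moreover have "real m - x < real L"
  proof -
    have "real m - x = real m * real L / real K"
      unfolding x_def using K by (simp add: field_simps)
    then show ?thesis
      using assms K by (simp add: divide_less_eq)
  qed
  moreover have "jstar K m L = nat \<lceil>x\<rceil>"
    unfolding jstar_def x_def ..
  ultimately show "1 \<le> jstar K m L" "jstar K m L \<le> m" "jstar K m L \<le> K - L" "m < jstar K m L + L"
    by (auto simp: ceiling_le_iff) linarith+
qed

lemma R_KL_le: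
  assumes "1 \<le> L" "L < K" "1 \<le> m" "m < K"
  shows "R_KL K m L \<le> 1 + real (((K - 1) choose m) - 1) / real (K choose m)"
proof -
  define j where "j = jstar K m L"
  define n where "n = K - L - 1"
  define p where "p = L - 1"
  have n: "Suc n = K - L" and p: "Suc p = L" and np: "n + Suc p = K - 1"
    unfolding n_def p_def using assms by auto
  note j = jstar_bounds[OF assms, folded j_def]
  define S1 where "S1 = (\<Sum>i<j. (Suc n choose i) * (p choose (m - i)))"
  define S2 where "S2 = (\<Sum>i\<in>{j..m}. (n choose i) * (Suc p choose (m - i)))"
  have "j - 1 \<le> n" "m - j \<le> p"
    using j n p by linarith+
  then have "(n choose (j - 1)) * (p choose (m - j)) \<ge> 1"
    by (simp add: Suc_le_eq)
  moreover have "S1 + S2 + (n choose (j - 1)) * (p choose (m - j)) = (K - 1) choose m"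
    using vandermonde_switch[OF j(1,2), of n p] unfolding S1_def S2_def np .
  ultimately have S: "S1 + S2 \<le> ((K - 1) choose m) - 1"
    by linarith
  have "(\<Sum>i\<in>{m + 1 - L ..< j}. ((K - L) choose i) * ((L - 1) choose (m - i))) = S1"
    unfolding S1_def n [symmetric] p_def using assms(1) by (intro sum.mono_neutral_left) auto
  moreover have "(\<Sum>i\<in>{j .. min m (K - L - 1)}. ((K - L - 1) choose i) * (L choose (m - i))) = S2"
    unfolding S2_def n_def p [symmetric] by (intro sum.mono_neutral_left) auto
  ultimately have "R_KL K m L = 1 + real (S1 + S2) / real (K choose m)"
    unfolding R_KL_def j_def [symmetric] of_nat_mult [symmetric] of_nat_sum [symmetric] by simp
  also have "\<dots> \<le> 1 + real (((K - 1) choose m) - 1) / real (K choose m)"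
    using S by (simp add: divide_right_mono)
  finally show ?thesis .
qed

lemma one_le_R_KL: "1 \<le> R_KL K m L"
  unfolding R_KL_def by (intro add_increasing2 divide_nonneg_nonneg add_nonneg_nonneg sum_nonneg) auto

lemma choose_pred_ratio:
  assumes "m < K"
  shows "real ((K - 1) choose m) / real (K choose m) = real (K - m) / real K"
proof -
  have "(K - m) * (K choose m) = K * ((K - 1) choose m)"
    by (rule binomial_absorb_comp)
  then have "real (K - m) * real (K choose m) = real K * real ((K - 1) choose m)"
    by (metis of_nat_mult)
  then show ?thesis
    using assms by (simp add: field_simps)
qed

lemma R_K_less:
  assumes "1 \<le> m" "m < K"
  shows "R_K K m < 1 + real (K - m) / real K"
proof -
  have "R_KL K m L < 1 + real (K - m) / real K" if "L \<in> {1..<K}" for L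
  proof -
    have "0 < (K - 1) choose m"
      using assms by simp
    then have "real (((K - 1) choose m) - 1) < real ((K - 1) choose m)"
      by simp
    then have "real (((K - 1) choose m) - 1) / real (K choose m)
        < real ((K - 1) choose m) / real (K choose m)"
      using assms by (simp add: divide_strict_right_mono)
    also have "\<dots> = real (K - m) / real K"
      using assms(2) by (rule choose_pred_ratio)
    finally show ?thesis
      using R_KL_le[of L K m] that assms by auto
  qed
  then show ?thesis
    unfolding R_K_def using assms by (simp add: Max_less_iff)
qed

lemma R_K_top_cache:
  assumes "2 \<le> K"
  shows "R_K K (K - 1) = 1"
proof -
  have "R_KL K (K - 1) L = 1" if "L \<in> {1..<K}" for L
  proof -
    have "R_KL K (K - 1) L \<le> 1 + real (((K - 1) choose (K - 1)) - 1) / real (K choose (K - 1))"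
      using that assms by (intro R_KL_le) auto
    also have "\<dots> = 1"
      by simp
    finally show ?thesis
      using one_le_R_KL[of K "K - 1" L] by simp
  qed
  then have "(\<lambda>L. R_KL K (K - 1) L) ` {1..<K} = {1}"
    using assms by force
  then show ?thesis
    unfolding R_K_def by simp
qed

lemma R_hat_eq_if_le:
  assumes "m + 2 \<le> K"
  shows "R_hat K (real m / real K) = 1 + real (K - m) / real K"
proof -
  have K: "real K > 0"
    using assms by simp
  have "2 / real K \<le> 1 / (1 + real m / real K * real K / 2)"
    using assms K by (simp add: field_simps)
  then have "R_hat K (real m / real K) = real K * (1 - real m / real K / 2) * (2 / real K)"
    unfolding R_hat_def by (simp add: min_absorb2)
  also have "\<dots> = 1 + real (K - m) / real K"
    using assms K by (simp add: of_nat_diff field_simps)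
  finally show ?thesis .
qed

lemma R_hat_top_cache:
  assumes "1 \<le> K"
  shows "R_hat K ((real K - 1) / real K) = 1"
proof -
  have K: "real K > 0"
    using assms by simp
  have e: "1 + (real K - 1) / real K * real K / 2 = (real K + 1) / 2"
    using K by (simp add: field_simps)
  have "1 / (1 + (real K - 1) / real K * real K / 2) = 2 / (real K + 1)"
    unfolding e by simp
  moreover have "2 / (real K + 1) \<le> 2 / real K"
    using K by (simp add: frac_le)
  moreover have "real K * (1 - (real K - 1) / real K / 2) = (real K + 1) / 2"
    using K by (simp add: field_simps)
  ultimately show ?thesis
    unfolding R_hat_def by (simp add: min_absorb1)
qed

lemma nat_ceiling_half: "nat \<lceil>real K / 2\<rceil> = (K + 1) div 2"
proof (cases "even K")
  case True
  then show ?thesis by auto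
next
  case False
  then obtain a where a: "K = 2 * a + 1"
    using oddE by blast
  have "\<lceil>real K / 2\<rceil> = int a + 1"
    unfolding a by (intro ceiling_unique) auto
  then show ?thesis
    using a by simp
qed

theorem proposition2:
  fixes K t :: nat
  assumes "K \<ge> 2" and "1 \<le> t" and "t \<le> nat \<lceil>real K / 2\<rceil> - 1"
  shows "R_K K (2 * t) \<le> R_hat K (real (2 * t) / real K)
       \<and> (R_K K (2 * t) < R_hat K (real (2 * t) / real K)
            \<longleftrightarrow> \<not> (odd K \<and> real (2 * t) / real K = (real K - 1) / real K))"
proof (cases "2 * t = K - 1")
  case True
  then have "odd K" and "real (2 * t) = real K - 1"
    using assms(1) by (presburger, simp add: of_nat_diff)
  then show ?thesis
    using True R_K_top_cache[OF assms(1)] R_hat_top_cache[of K] assms(1) by simp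
next
  case False
  have "2 * t < K"
    using assms(2,3) unfolding nat_ceiling_half by presburger
  with False have "2 * t + 2 \<le> K"
    by presburger
  moreover have "real (2 * t) \<noteq> real K - 1"
    using False \<open>2 * t < K\<close> by linarith
  ultimately show ?thesis
    using R_K_less[of "2 * t" K] R_hat_eq_if_le[of "2 * t" K] assms(2) by (simp add: divide_cancel_right)
qed

end
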